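(* Let $\lambda_0>1$. There exists $C_0>0$ depending only on $\lambda_0$ such that for every $\lambda\ge\lambda_0$ and every $k\ge1$: $$\frac{k}{|z_n(k)+1|}\le\begin{cases}2\sqrt2\,k&\text{for all }n\in\mathbb N_0,\\ 2\sqrt2\left(\frac{2}{\lambda_0}+1\right)\dfrac{k}{n+1}&\text{for }n>\lambda k^2,\\ C_0\dfrac{k}{n+1}&\text{for }n\ge\lambda k,\end{cases}$$ and moreover $\dfrac{|z_n(k)+1|}{k}\le1+\dfrac nk$ for all $n\in\mathbb N_0$.
   Context: For $n\in\mathbb N_0$ let $h_n^{(1)}$ be the spherical Hankel function of the first kind of order $n$, and for $r>0$ set $z_n(r):=r\,\dfrac{(h_n^{(1)})'(r)}{h_n^{(1)}(r)}$. *)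

theory Defs
  imports "HOL-Analysis.Analysis"
begin

text \<open>Spherical Hankel function of the first kind (DLMF 10.49.6):
  h_n(z) = e^{iz} * sum_{k=0}^n i^{k-n-1} a_k(n+1/2) / z^{k+1},
  a_k(n+1/2) = (n+k)! / (2^k k! (n-k)!).  Note i^{k-n-1} = i^k (-i)^{n+1}.\<close>
definition sph_hankel1 :: "nat \<Rightarrow> complex \<Rightarrow> complex" where
  "sph_hankel1 n z = exp (\<i> * z) *
     (\<Sum>k\<le>n. \<i> ^ k * (- \<i>) ^ (Suc n) *
        of_real (fact (n + k) / (2 ^ k * fact k * fact (n - k))) / z ^ (Suc k))"

definition zfun :: "nat \<Rightarrow> real \<Rightarrow> complex" where
  "zfun n r = of_real r * deriv (sph_hankel1 n) (of_real r) / sph_hankel1 n (of_real r)"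

end

theory Submission
  imports Defs "HOL-Computational_Algebra.Polynomial"
begin

text \<open>
  Write \<open>h\<^sub>n(z) = e\<^sup>i\<^sup>z (-i)\<^sup>n\<^sup>+\<^sup>1 z\<^sup>-\<^sup>1 Q(1/z)\<close> with a polynomial \<open>Q\<close> of degree \<open>n\<close>, and let \<open>R\<close> be
  the polynomial with conjugate coefficients.  Then \<open>z\<^sub>n(r) + 1 = i r - x Q'(x) / Q(x)\<close> at \<open>x = 1/r\<close>.
  The Bessel equations for \<open>Q\<close> and \<open>R\<close> yield two polynomial identities: the Wronskian
  \<open>x\<^sup>2 (Q' R - Q R') = 2 i (Q R - 1)\<close>, and a third order equation for \<open>A = Q R\<close> which forces
  \<open>A(x) = \<Sum> c\<^sub>m x\<^sup>2\<^sup>m\<close> with explicit coefficients \<open>c\<^sub>m \<ge> 0\<close>, \<open>c\<^sub>0 = 1\<close>.  Together they give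
  \<open>z\<^sub>n(r) + 1 = (- S + i r) / G\<close>, where \<open>G = \<Sum> t\<^sub>m \<ge> 1\<close> and \<open>S = \<Sum> m t\<^sub>m\<close> for the weights
  \<open>t\<^sub>m = c\<^sub>m x\<^sup>2\<^sup>m\<close>.

  Everything else is an estimate of these weights.  \<open>S \<ge> G - 1\<close> gives \<open>|z\<^sub>n(k) + 1| \<ge> 1/\<surd>2\<close>.
  The recursion for \<open>t\<^sub>m\<close> bounds \<open>n G - S\<close> by \<open>2 k\<^sup>2 G / (n + 1)\<close>, which is small when
  \<open>n > \<lambda> k\<^sup>2\<close>.  When \<open>n \<ge> \<lambda> k\<close> the weights grow geometrically up to the index \<open>\<theta> n\<close>, so at
  least half of the mass of \<open>G\<close> sits at indices \<open>\<ge> \<theta> n / 2\<close> and \<open>S / G\<close> is of order \<open>n\<close>.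
\<close>

section \<open>The polynomial part of the spherical Hankel function\<close>

definition hankel_coeff :: "nat \<Rightarrow> nat \<Rightarrow> real" where
  "hankel_coeff n k = fact (n + k) / (2 ^ k * fact k * fact (n - k))"

lemma hankel_coeff_0 [simp]: "hankel_coeff n 0 = 1"
  by (simp add: hankel_coeff_def)

lemma hankel_coeff_Suc:
  assumes "k < n"
  shows "2 * (real k + 1) * hankel_coeff n (Suc k) = real (n - k) * (real n + real k + 1) * hankel_coeff n k"
proof -
  have "n - k = Suc (n - Suc k)"
    using assms by simp
  then have "(fact (n - k) :: real) = real (n - k) * fact (n - Suc k)"
    by (metis fact_Suc)
  moreover have "(fact (n + Suc k) :: real) = (real n + real k + 1) * fact (n + k)"
    by (simp add: algebra_simps)
  moreover have "(fact (Suc k) :: real) = (real k + 1) * fact k"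
    by simp
  ultimately show ?thesis
    using assms unfolding hankel_coeff_def by (simp add: divide_simps) (simp add: algebra_simps)
qed

text \<open>\<open>Q = hankel_poly n \<i>\<close> and \<open>R = hankel_poly n (- \<i>)\<close>.\<close>
definition hankel_poly :: "nat \<Rightarrow> complex \<Rightarrow> complex poly" where
  "hankel_poly n s = (\<Sum>k\<le>n. monom (s ^ k * of_real (hankel_coeff n k)) k)"

lemma coeff_hankel_poly:
  "coeff (hankel_poly n s) k = (if k \<le> n then s ^ k * of_real (hankel_coeff n k) else 0)"
  by (simp add: hankel_poly_def coeff_sum)

lemma poly_hankel_poly: "poly (hankel_poly n s) x = (\<Sum>k\<le>n. s ^ k * of_real (hankel_coeff n k) * x ^ k)"
  by (simp add: hankel_poly_def poly_sum poly_monom)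

definition x_poly :: "complex poly" where
  "x_poly = [:0, 1:]"

lemma pderiv_x_poly [simp]: "pderiv x_poly = 1"
  by (simp add: x_poly_def pderiv_pCons)

lemma poly_x_poly [simp]: "poly x_poly z = z"
  by (simp add: x_poly_def)

lemma coeff_x_poly_mult: "coeff (x_poly * p) k = (case k of 0 \<Rightarrow> 0 | Suc j \<Rightarrow> coeff p j)"
  by (simp add: x_poly_def coeff_pCons split: nat.split)

text \<open>The spherical Bessel equation for \<open>z\<^sup>-\<^sup>1 e\<^sup>s\<^sup>z p(1/z)\<close>, rewritten as an equation for \<open>p\<close>
  in the variable \<open>x = 1/z\<close>.\<close>
definition hankel_ode :: "complex \<Rightarrow> nat \<Rightarrow> complex poly \<Rightarrow> complex poly" where
  "hankel_ode s n p = x_poly * x_poly * pderiv (pderiv p) + 2 * (x_poly - [:s:]) * pderiv p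
     - [:of_nat (n * (n + 1)):] * p"

lemma coeff_hankel_ode:
  "coeff (hankel_ode s n p) k = of_nat (k * (k + 1)) * coeff p k
     - 2 * s * of_nat (Suc k) * coeff p (Suc k) - of_nat (n * (n + 1)) * coeff p k"
  by (auto simp: hankel_ode_def coeff_pderiv coeff_x_poly_mult numeral_poly algebra_simps split: nat.split)

lemma hankel_ode_hankel_poly:
  assumes "s * s = -1"
  shows "hankel_ode s n (hankel_poly n s) = 0"
proof (rule poly_eqI)
  fix k
  show "coeff (hankel_ode s n (hankel_poly n s)) k = coeff 0 k"
  proof (cases "k < n")
    case True
    have "2 * s * of_nat (Suc k) * (s ^ Suc k * of_real (hankel_coeff n (Suc k)))
        = s * s * s ^ k * of_real (2 * (real k + 1) * hankel_coeff n (Suc k))"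
      by (simp add: algebra_simps)
    also have "\<dots> = - (s ^ k * (of_nat (n - k) * (of_nat n + of_nat k + 1) * of_real (hankel_coeff n k)))"
      unfolding hankel_coeff_Suc[OF True] assms by simp
    finally show ?thesis
      using True by (simp add: coeff_hankel_ode coeff_hankel_poly algebra_simps)
  next
    case False
    then show ?thesis
      by (cases "k = n") (auto simp: coeff_hankel_ode coeff_hankel_poly algebra_simps)
  qed
qed

lemma pderiv_const [simp]: "pderiv [:c:] = 0"
  by (simp add: pderiv_pCons)

lemma const_uminus: "[:- c:] = - [:c:]"
  by simp

lemmas pderiv_ring_simps = pderiv_add pderiv_diff pderiv_mult pderiv_minus const_uminus
  algebra_simps

text \<open>Removing these from the simpset keeps constant polynomials as ring factors, so that the
  identities below become plain ring identities.\<close>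
lemmas pCons_arith = mult_pCons_left mult_pCons_right add_pCons minus_pCons diff_pCons

lemma pderiv_hankel_wronskian:
  "pderiv (x_poly * x_poly * (pderiv p * q - p * pderiv q) - 2 * [:s:] * (p * q))
     = hankel_ode s n p * q - p * hankel_ode (- s) n q"
  by (simp add: hankel_ode_def pderiv_ring_simps del: pCons_arith)

lemma pderiv_hankel_ode:
  "pderiv (hankel_ode s n p) = x_poly * x_poly * pderiv (pderiv (pderiv p))
     + 2 * (2 * x_poly - [:s:]) * pderiv (pderiv p) + (2 - [:of_nat (n * (n + 1)):]) * pderiv p"
  by (simp add: hankel_ode_def pderiv_ring_simps del: pCons_arith)

definition hankel_product_op :: "nat \<Rightarrow> complex poly \<Rightarrow> complex poly" where
  "hankel_product_op n A = 4 * pderiv A - 4 * [:of_nat (n * (n + 1)):] * x_poly * pderiv (x_poly * A)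
    + x_poly * x_poly * pderiv (pderiv (pderiv (x_poly * x_poly * A)))"

lemma hankel_product_ode:
  assumes "s * s = -1" "hankel_ode s n p = 0" "hankel_ode (- s) n q = 0"
  shows "hankel_product_op n (p * q) = 0"
proof -
  have "hankel_product_op n (p * q)
    = (2 * (x_poly + [:s:]) * q + 3 * x_poly * x_poly * pderiv q) * hankel_ode s n p
      + x_poly * x_poly * q * pderiv (hankel_ode s n p)
      + (2 * (x_poly - [:s:]) * p + 3 * x_poly * x_poly * pderiv p) * hankel_ode (- s) n q
      + x_poly * x_poly * p * pderiv (hankel_ode (- s) n q)
      + 4 * ([:s:] * [:s:] + 1) * pderiv (p * q)"
    unfolding pderiv_hankel_ode by (simp add: hankel_product_op_def hankel_ode_def pderiv_ring_simps del: pCons_arith)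
  moreover have "[:s:] * [:s:] + 1 = 0"
    using assms(1) by (simp add: one_pCons)
  ultimately show ?thesis
    using assms by simp
qed

lemma hankel_wronskian:
  "x_poly * x_poly * (pderiv (hankel_poly n \<i>) * hankel_poly n (- \<i>)
      - hankel_poly n \<i> * pderiv (hankel_poly n (- \<i>)))
   = 2 * [:\<i>:] * (hankel_poly n \<i> * hankel_poly n (- \<i>) - 1)"
proof -
  define W where "W = x_poly * x_poly * (pderiv (hankel_poly n \<i>) * hankel_poly n (- \<i>)
      - hankel_poly n \<i> * pderiv (hankel_poly n (- \<i>))) - 2 * [:\<i>:] * (hankel_poly n \<i> * hankel_poly n (- \<i>))"
  have "pderiv W = 0"
    unfolding W_def pderiv_hankel_wronskian[where n = n] by (simp add: hankel_ode_hankel_poly)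
  then have "W = [:coeff W 0:]"
    by (simp add: pderiv_eq_0_iff degree_0_id)
  also have "coeff W 0 = - 2 * \<i>"
    by (simp add: W_def x_poly_def coeff_mult_0 coeff_hankel_poly numeral_poly)
  finally show ?thesis
    unfolding W_def by (simp add: algebra_simps numeral_poly)
qed

section \<open>The squared modulus of the polynomial part\<close>

lemma coeff_hankel_product_op:
  "coeff (hankel_product_op n A) j = 4 * of_nat (Suc j) * coeff A (Suc j)
     - (case j of 0 \<Rightarrow> 0 | Suc m \<Rightarrow>
          of_nat (Suc m) * (4 * of_nat (n * (n + 1)) - of_nat m * of_nat (m + 2)) * coeff A m)"
  by (simp add: hankel_product_op_def coeff_pderiv coeff_x_poly_mult numeral_poly mult.assoc
      split: nat.split) (simp add: algebra_simps)

fun hankel_sq_coeff :: "nat \<Rightarrow> nat \<Rightarrow> real" where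
  "hankel_sq_coeff n 0 = 1"
| "hankel_sq_coeff n (Suc m) =
     (2 * real m + 1) * (real n + real m + 1) * (real n - real m) / (2 * (real m + 1)) * hankel_sq_coeff n m"

lemma hankel_sq_coeff_eq_0: "n < m \<Longrightarrow> hankel_sq_coeff n m = 0"
  by (induction m) (auto simp: less_Suc_eq)

lemma hankel_sq_coeff_nonneg: "hankel_sq_coeff n m \<ge> 0"
proof (induction m)
  case (Suc m)
  show ?case
  proof (cases "m < n")
    case True
    then show ?thesis
      using Suc.IH by simp
  next
    case False
    then have "hankel_sq_coeff n (Suc m) = 0"
      by (intro hankel_sq_coeff_eq_0) simp
    then show ?thesis
      by (simp del: hankel_sq_coeff.simps)
  qed
qed simp

lemma coeff_hankel_product_op_solution:
  assumes "hankel_product_op n A = 0" "coeff A 0 = 1"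
  shows "coeff A (2 * m) = of_real (hankel_sq_coeff n m) \<and> coeff A (Suc (2 * m)) = 0"
proof (induction m)
  case 0
  show ?case
    using assms coeff_hankel_product_op[of n A 0] by simp
next
  case (Suc m)
  have "real (2 * m + 1) * (4 * real (n * (n + 1)) - real (2 * m) * real (2 * m + 2)) * hankel_sq_coeff n m
      = 4 * real (2 * m + 2) * hankel_sq_coeff n (Suc m)"
    by (simp add: field_simps)
  then have "of_nat (2 * m + 1) * (4 * of_nat (n * (n + 1)) - of_nat (2 * m) * of_nat (2 * m + 2))
      * complex_of_real (hankel_sq_coeff n m) = 4 * of_nat (2 * m + 2) * of_real (hankel_sq_coeff n (Suc m))"
    by (metis (mono_tags) of_real_mult of_real_diff of_real_of_nat_eq of_real_numeral)
  then have "4 * of_nat (2 * m + 2) * coeff A (2 * m + 2)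
      = 4 * of_nat (2 * m + 2) * of_real (hankel_sq_coeff n (Suc m))"
    using assms Suc.IH coeff_hankel_product_op[of n A "Suc (2 * m)"]
    by (simp del: hankel_sq_coeff.simps)
  moreover have "(of_nat (4 * (2 * m + 2)) :: complex) \<noteq> 0"
    by (simp only: of_nat_eq_0_iff) simp
  ultimately have "coeff A (2 * Suc m) = of_real (hankel_sq_coeff n (Suc m))"
    by (simp del: hankel_sq_coeff.simps)
  moreover have "of_nat (4 * (2 * m + 3)) * coeff A (Suc (2 * Suc m)) = 0"
    using assms Suc.IH coeff_hankel_product_op[of n A "Suc (Suc (2 * m))"] by (simp add: algebra_simps)
  moreover have "(of_nat (4 * (2 * m + 3)) :: complex) \<noteq> 0"
    by (simp only: of_nat_eq_0_iff) simp
  ultimately show ?case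
    by (simp del: hankel_sq_coeff.simps)
qed

lemma hankel_poly_product_eq:
  "hankel_poly n \<i> * hankel_poly n (- \<i>) = (\<Sum>m\<le>n. monom (of_real (hankel_sq_coeff n m)) (2 * m))"
    (is "?A = ?B")
proof (rule poly_eqI)
  fix j
  have A: "coeff ?A (2 * m) = of_real (hankel_sq_coeff n m) \<and> coeff ?A (Suc (2 * m)) = 0" for m
    using hankel_product_ode[of \<i> n "hankel_poly n \<i>" "hankel_poly n (- \<i>)"]
    by (intro coeff_hankel_product_op_solution)
       (simp_all add: hankel_ode_hankel_poly coeff_mult_0 coeff_hankel_poly)
  have B: "coeff ?B (2 * m) = of_real (hankel_sq_coeff n m) \<and> coeff ?B (Suc (2 * m)) = 0" for m
  proof
    show "coeff ?B (2 * m) = of_real (hankel_sq_coeff n m)"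
      by (simp add: coeff_sum hankel_sq_coeff_eq_0)
    have "\<And>k. 2 * k \<noteq> Suc (2 * m)"
      by presburger
    then show "coeff ?B (Suc (2 * m)) = 0"
      by (simp add: coeff_sum)
  qed
  have "j = 2 * (j div 2) \<or> j = Suc (2 * (j div 2))"
    by presburger
  then show "coeff ?A j = coeff ?B j"
    using A[of "j div 2"] B[of "j div 2"] by auto
qed

text \<open>At \<open>x = 1/r\<close>, \<open>hankel_norm_sq n x = r\<^sup>2 |h\<^sub>n(r)|\<^sup>2\<close>.\<close>

definition hankel_sq_term :: "nat \<Rightarrow> real \<Rightarrow> nat \<Rightarrow> real" where
  "hankel_sq_term n x m = hankel_sq_coeff n m * x ^ (2 * m)"

definition hankel_norm_sq :: "nat \<Rightarrow> real \<Rightarrow> real" where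
  "hankel_norm_sq n x = (\<Sum>m\<le>n. hankel_sq_term n x m)"

definition hankel_moment :: "nat \<Rightarrow> real \<Rightarrow> real" where
  "hankel_moment n x = (\<Sum>m\<le>n. real m * hankel_sq_term n x m)"

lemma poly_hankel_poly_product:
  "poly (hankel_poly n \<i> * hankel_poly n (- \<i>)) (of_real x) = of_real (hankel_norm_sq n x)"
  by (simp add: hankel_poly_product_eq poly_sum poly_monom hankel_norm_sq_def hankel_sq_term_def)

lemma poly_pderiv_hankel_poly_product:
  "of_real x * poly (pderiv (hankel_poly n \<i> * hankel_poly n (- \<i>))) (of_real x)
     = of_real (2 * hankel_moment n x)"
proof -
  have "of_real x * poly (pderiv (monom (of_real (hankel_sq_coeff n m)) (2 * m))) (of_real x)
      = (of_real (2 * (real m * hankel_sq_term n x m)) :: complex)" for m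
  proof (cases m)
    case (Suc k)
    then have "(of_real x :: complex) ^ (2 * m) = of_real x * of_real x ^ (2 * m - 1)"
      by (metis power_Suc Suc_diff_1 zero_less_Suc mult_pos_pos zero_less_numeral)
    then show ?thesis
      by (simp add: pderiv_monom poly_monom hankel_sq_term_def)
  qed (simp add: hankel_sq_term_def)
  then show ?thesis
    by (simp add: hankel_poly_product_eq higher_pderiv_sum[of 1, simplified] poly_sum
        sum_distrib_left hankel_moment_def)
qed

lemma hankel_sq_term_nonneg: "hankel_sq_term n x m \<ge> 0"
  by (simp add: hankel_sq_term_def hankel_sq_coeff_nonneg power_mult)

lemma hankel_norm_sq_ge_1: "hankel_norm_sq n x \<ge> 1"
proof -
  have "hankel_sq_term n x 0 \<le> hankel_norm_sq n x"
    unfolding hankel_norm_sq_def by (rule member_le_sum) (auto simp: hankel_sq_term_nonneg)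
  then show ?thesis
    by (simp add: hankel_sq_term_def)
qed

section \<open>The logarithmic derivative\<close>

lemma sph_hankel1_eq:
  "sph_hankel1 n z = exp (\<i> * z) * (- \<i>) ^ Suc n * (inverse z * poly (hankel_poly n \<i>) (inverse z))"
proof -
  have "sph_hankel1 n z = exp (\<i> * z) * (\<Sum>k\<le>n. (- \<i>) ^ Suc n
      * (inverse z * (\<i> ^ k * of_real (hankel_coeff n k) * inverse z ^ k)))"
    unfolding sph_hankel1_def hankel_coeff_def
    by (auto simp: divide_inverse power_inverse mult_ac intro!: sum.cong)
  then show ?thesis
    by (simp add: poly_hankel_poly sum_distrib_left mult_ac)
qed

lemma has_field_derivative_sph_hankel1:
  assumes "z \<noteq> 0"
  shows "(sph_hankel1 n has_field_derivative exp (\<i> * z) * (- \<i>) ^ Suc n *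
     (\<i> * inverse z * poly (hankel_poly n \<i>) (inverse z) - inverse z ^ 2 *
       (poly (hankel_poly n \<i>) (inverse z) + inverse z * poly (pderiv (hankel_poly n \<i>)) (inverse z))))
     (at z)"
  unfolding sph_hankel1_eq [abs_def] using assms
  by (auto intro!: derivative_eq_intros simp: power2_eq_square algebra_simps)

lemma sph_hankel1_log_deriv:
  assumes "z \<noteq> 0" and "poly (hankel_poly n \<i>) (inverse z) \<noteq> 0"
  shows "z * deriv (sph_hankel1 n) z / sph_hankel1 n z + 1
    = \<i> * z - inverse z * poly (pderiv (hankel_poly n \<i>)) (inverse z) / poly (hankel_poly n \<i>) (inverse z)"
  using assms by (simp add: DERIV_imp_deriv[OF has_field_derivative_sph_hankel1] sph_hankel1_eq
      field_simps power2_eq_square)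

lemma zfun_plus_one:
  assumes "r > 0"
  shows "zfun n r + 1 = Complex (- hankel_moment n (1 / r) / hankel_norm_sq n (1 / r))
                                (r / hankel_norm_sq n (1 / r))"
proof -
  define x where "x = 1 / r"
  define G where "G = hankel_norm_sq n x"
  define S where "S = hankel_moment n x"
  define P where "P = poly (hankel_poly n \<i>) (of_real x)"
  define P' where "P' = poly (pderiv (hankel_poly n \<i>)) (of_real x)"
  define R where "R = poly (hankel_poly n (- \<i>)) (of_real x)"
  define R' where "R' = poly (pderiv (hankel_poly n (- \<i>))) (of_real x)"
  have x: "of_real x = inverse (complex_of_real r)" "x \<noteq> 0"
    using assms by (simp_all add: x_def divide_inverse)
  have G: "P * R = of_real G" "G \<ge> 1"
    using poly_hankel_poly_product[of n x] hankel_norm_sq_ge_1[of n x]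
    by (simp_all add: P_def R_def G_def)
  then have "P \<noteq> 0" "R \<noteq> 0"
    by auto
  have A: "of_real x * (P' * R + P * R') = of_real (2 * S)"
    using poly_pderiv_hankel_poly_product[of x n]
    by (simp add: P_def P'_def R_def R'_def S_def pderiv_mult add.commute mult.commute)
  have W: "of_real x * of_real x * (P' * R - P * R') = 2 * \<i> * (P * R - 1)"
    using arg_cong[OF hankel_wronskian[of n], of "\<lambda>p. poly p (of_real x)"]
    by (simp add: P_def P'_def R_def R'_def numeral_poly)
  have "2 * (of_real x * (of_real x * P' * R))
      = of_real x * (of_real x * (P' * R + P * R')) + of_real x * of_real x * (P' * R - P * R')"
    by (simp add: algebra_simps)
  also have "\<dots> = 2 * (of_real x * (of_real S + \<i> * of_real r * (of_real G - 1)))"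
    unfolding A W G(1) using x assms by (simp add: field_simps)
  finally have key: "of_real x * P' * R = of_real S + \<i> * of_real r * (of_real G - 1)"
    using x assms by simp
  have "zfun n r + 1 = \<i> * of_real r - of_real x * P' / P"
    using sph_hankel1_log_deriv[of "of_real r" n] assms \<open>P \<noteq> 0\<close>
    by (simp add: zfun_def x P_def P'_def)
  also have "\<dots> = \<i> * of_real r - of_real x * P' * R / of_real G"
    using \<open>P \<noteq> 0\<close> \<open>R \<noteq> 0\<close> by (simp flip: G(1))
  also have "\<dots> = Complex (- S / G) (r / G)"
    unfolding key using G by (simp add: Complex_eq field_simps)
  finally show ?thesis
    by (simp add: x_def G_def S_def)
qed

lemma norm_zfun_plus_one:
  assumes "r > 0"
  shows "cmod (zfun n r + 1) = sqrt ((hankel_moment n (1 / r) / hankel_norm_sq n (1 / r))\<^sup>2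
                                    + (r / hankel_norm_sq n (1 / r))\<^sup>2)"
  using zfun_plus_one[OF assms] by (simp add: complex_norm power2_eq_square)

lemma moment_ratio_le_norm_zfun_plus_one:
  "r > 0 \<Longrightarrow> hankel_moment n (1 / r) / hankel_norm_sq n (1 / r) \<le> cmod (zfun n r + 1)"
  by (simp add: norm_zfun_plus_one)

section \<open>Estimates for the weights\<close>

lemma hankel_sq_term_0 [simp]: "hankel_sq_term n x 0 = 1"
  by (simp add: hankel_sq_term_def)

lemma hankel_sq_term_Suc:
  "2 * (real m + 1) * hankel_sq_term n x (Suc m)
     = (2 * real m + 1) * (real n + real m + 1) * (real n - real m) * x\<^sup>2 * hankel_sq_term n x m"
  by (simp add: hankel_sq_term_def power_mult power2_eq_square field_simps)

lemma sum_atMost_split_first: "(\<Sum>m\<le>n. f m) = f 0 + (\<Sum>m<n. f (Suc m))"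
  by (simp add: atMost_atLeast0 sum.atLeast_Suc_atMost sum.atLeast1_atMost_eq lessThan_Suc_atMost[symmetric]
      sum.lessThan_Suc_shift del: sum.lessThan_Suc)

lemma hankel_moment_ge: "hankel_moment n x \<ge> hankel_norm_sq n x - 1"
proof -
  have "(\<Sum>m<n. hankel_sq_term n x (Suc m)) \<le> (\<Sum>m<n. real (Suc m) * hankel_sq_term n x (Suc m))"
    by (intro sum_mono) (simp add: hankel_sq_term_nonneg algebra_simps)
  then show ?thesis
    unfolding hankel_moment_def hankel_norm_sq_def sum_atMost_split_first[of _ n] by simp
qed

lemma hankel_moment_le: "hankel_moment n x \<le> real n * hankel_norm_sq n x"
  unfolding hankel_moment_def hankel_norm_sq_def sum_distrib_left
  by (intro sum_mono mult_right_mono) (auto simp: hankel_sq_term_nonneg)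

lemma hankel_moment_deficit:
  "x\<^sup>2 * (real n + 1) * (real n * hankel_norm_sq n x - hankel_moment n x) \<le> 2 * hankel_norm_sq n x"
proof -
  have termwise: "x\<^sup>2 * (real n + 1) * ((real n - real m) * hankel_sq_term n x m) \<le> 2 * hankel_sq_term n x (Suc m)"
    if "m < n" for m
  proof -
    define Z where "Z = x\<^sup>2 * (real n - real m) * hankel_sq_term n x m"
    have "Z \<ge> 0"
      using that by (simp add: Z_def hankel_sq_term_nonneg)
    have "x\<^sup>2 * (real n + 1) * ((real n - real m) * hankel_sq_term n x m) * (real m + 1)
        = Z * ((real n + 1) * (real m + 1))"
      by (simp add: Z_def algebra_simps)
    also have "\<dots> \<le> Z * ((2 * real m + 1) * (real n + real m + 1))"
      using \<open>Z \<ge> 0\<close> by (intro mult_left_mono) (simp_all add: algebra_simps)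
    also have "\<dots> = 2 * hankel_sq_term n x (Suc m) * (real m + 1)"
      using hankel_sq_term_Suc[of m n x] by (simp add: Z_def algebra_simps)
    finally show ?thesis
      by (simp add: mult_le_cancel_right_pos)
  qed
  have deficit: "real n * hankel_norm_sq n x - hankel_moment n x = (\<Sum>m<n. (real n - real m) * hankel_sq_term n x m)"
    by (simp add: hankel_norm_sq_def hankel_moment_def sum_distrib_left lessThan_Suc_atMost[symmetric]
        left_diff_distrib sum_subtractf distrib_left)
  have "x\<^sup>2 * (real n + 1) * (real n * hankel_norm_sq n x - hankel_moment n x)
      \<le> (\<Sum>m<n. 2 * hankel_sq_term n x (Suc m))"
    unfolding deficit sum_distrib_left by (intro sum_mono termwise) simp
  also have "\<dots> \<le> 2 * hankel_norm_sq n x"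
    by (simp add: hankel_norm_sq_def sum_atMost_split_first[of _ n] sum_distrib_left)
  finally show ?thesis .
qed

lemma hankel_sq_term_growth:
  assumes "m \<le> n"
  shows "((real n)\<^sup>2 - (real m)\<^sup>2) * x\<^sup>2 * ((real m + 1) * hankel_sq_term n x m)
    \<le> (real m + 2) * hankel_sq_term n x (Suc m)"
proof -
  define Z where "Z = x\<^sup>2 * hankel_sq_term n x m"
  have "Z \<ge> 0"
    by (simp add: Z_def hankel_sq_term_nonneg)
  have D: "0 \<le> (real n)\<^sup>2 - (real m)\<^sup>2" "(real n)\<^sup>2 - (real m)\<^sup>2 \<le> (real n + real m + 1) * (real n - real m)"
    using assms by (simp_all add: power2_eq_square algebra_simps mult_mono)
  have "2 * (real m + 1)\<^sup>2 \<le> (real m + 2) * (2 * real m + 1)"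
    by (simp add: power2_eq_square algebra_simps)
  then have "2 * (real m + 1)\<^sup>2 * ((real n)\<^sup>2 - (real m)\<^sup>2)
      \<le> (real m + 2) * (2 * real m + 1) * ((real n + real m + 1) * (real n - real m))"
    by (rule mult_mono[OF _ D(2)]) (use D(1) in auto)
  then have "2 * (real m + 1)\<^sup>2 * ((real n)\<^sup>2 - (real m)\<^sup>2) * Z
      \<le> (real m + 2) * (2 * real m + 1) * ((real n + real m + 1) * (real n - real m)) * Z"
    using \<open>Z \<ge> 0\<close> by (rule mult_right_mono)
  also have "\<dots> = (real m + 2) * ((2 * real m + 1) * (real n + real m + 1) * (real n - real m) * x\<^sup>2
      * hankel_sq_term n x m)"
    by (simp add: Z_def mult_ac)
  also have "\<dots> = 2 * (real m + 1) * ((real m + 2) * hankel_sq_term n x (Suc m))"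
    unfolding hankel_sq_term_Suc[symmetric] by (simp only: mult_ac)
  also have "2 * (real m + 1)\<^sup>2 * ((real n)\<^sup>2 - (real m)\<^sup>2) * Z
      = 2 * (real m + 1) * (((real n)\<^sup>2 - (real m)\<^sup>2) * x\<^sup>2 * ((real m + 1) * hankel_sq_term n x m))"
    by (simp add: Z_def power2_eq_square mult_ac)
  finally show ?thesis
    by (simp add: mult_le_cancel_left_pos)
qed

lemma hankel_sq_term_growth_iter:
  assumes "q \<ge> 0" and "\<And>i. m \<le> i \<Longrightarrow> i < m + j \<Longrightarrow> i \<le> n \<and> q \<le> ((real n)\<^sup>2 - (real i)\<^sup>2) * x\<^sup>2"
  shows "q ^ j * ((real m + 1) * hankel_sq_term n x m) \<le> (real (m + j) + 1) * hankel_sq_term n x (m + j)"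
  using assms(2)
proof (induction j)
  case (Suc j)
  have i: "m + j \<le> n" "q \<le> ((real n)\<^sup>2 - (real (m + j))\<^sup>2) * x\<^sup>2"
    using Suc.prems[of "m + j"] by auto
  have "q ^ Suc j * ((real m + 1) * hankel_sq_term n x m)
      \<le> q * ((real (m + j) + 1) * hankel_sq_term n x (m + j))"
    using Suc assms(1) by (simp add: mult.assoc mult_left_mono)
  also have "\<dots> \<le> ((real n)\<^sup>2 - (real (m + j))\<^sup>2) * x\<^sup>2 * ((real (m + j) + 1) * hankel_sq_term n x (m + j))"
    using i by (intro mult_right_mono) (auto simp: hankel_sq_term_nonneg)
  also have "\<dots> \<le> (real (m + Suc j) + 1) * hankel_sq_term n x (m + Suc j)"
    using hankel_sq_term_growth[OF i(1), of x] by (simp add: add_ac)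
  finally show ?case .
qed simp

lemma shift_dominated_sum_le_moment:
  fixes f :: "nat \<Rightarrow> real"
  assumes "\<And>m. f m \<ge> 0" and "\<And>m. m < K \<Longrightarrow> f m \<le> f (m + K)" and "2 * K \<le> Suc n"
  shows "real K * (\<Sum>m\<le>n. f m) \<le> 2 * (\<Sum>m\<le>n. real m * f m)"
proof -
  have split: "(\<Sum>m\<le>n. g m) = (\<Sum>m<K. g m) + (\<Sum>m=K..n. g m)" for g :: "nat \<Rightarrow> real"
    using assms(3) by (subst sum.union_disjoint[symmetric]) (auto intro!: sum.cong)
  define T where "T = (\<Sum>m=K..n. f m)"
  have "(\<Sum>m<K. f m) \<le> (\<Sum>m<K. f (m + K))"
    by (intro sum_mono assms(2)) simp
  also have "\<dots> = (\<Sum>m=K..<K + K. f m)"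
    using sum.shift_bounds_nat_ivl[of f 0 K K] by (simp add: atLeast0LessThan)
  also have "\<dots> \<le> T"
    unfolding T_def using assms by (intro sum_mono2) auto
  finally have "real K * (\<Sum>m<K. f m) \<le> real K * T"
    by (rule mult_left_mono) simp
  moreover have "real K * T \<le> (\<Sum>m=K..n. real m * f m)"
    unfolding T_def sum_distrib_left using assms(1) by (intro sum_mono mult_right_mono) auto
  moreover have "0 \<le> (\<Sum>m<K. real m * f m)"
    using assms(1) by (simp add: sum_nonneg)
  ultimately show ?thesis
    unfolding split[of f] split[of "\<lambda>m. real m * f m"] T_def[symmetric] by argo
qed

lemma eventually_Suc_le_power:
  fixes q :: real
  assumes "q > 1"
  shows "eventually (\<lambda>K. real K + 1 \<le> q ^ K) sequentially"
proof -
  have "(\<lambda>K. real K / q ^ K + inverse (q ^ K)) \<longlonglongrightarrow> 0 + 0"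
    using lim_n_over_pown[of q] LIMSEQ_inverse_realpow_zero[of q] assms by (intro tendsto_add) auto
  then have "eventually (\<lambda>K. real K / q ^ K + inverse (q ^ K) < 1) sequentially"
    by (intro order_tendstoD(2)) auto
  then show ?thesis
    by eventually_elim (use assms in \<open>simp add: field_simps\<close>)
qed

lemma hankel_norm_sq_le_moment_of_growth:
  assumes "q > 1" and "real K + 1 \<le> q ^ K" and "2 * K \<le> n"
    and "\<And>i. i < 2 * K \<Longrightarrow> q \<le> ((real n)\<^sup>2 - (real i)\<^sup>2) * x\<^sup>2"
  shows "real K * hankel_norm_sq n x \<le> 2 * hankel_moment n x"
proof -
  have "hankel_sq_term n x m \<le> hankel_sq_term n x (m + K)" if "m < K" for m
  proof -
    have "i \<le> n \<and> q \<le> ((real n)\<^sup>2 - (real i)\<^sup>2) * x\<^sup>2" if "i < m + K" for i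
      using that \<open>m < K\<close> assms(3) assms(4)[of i] by simp
    then have iter: "q ^ K * ((real m + 1) * hankel_sq_term n x m)
        \<le> (real (m + K) + 1) * hankel_sq_term n x (m + K)"
      using assms(1) by (intro hankel_sq_term_growth_iter) auto
    have "(real (m + K) + 1) * hankel_sq_term n x m \<le> q ^ K * ((real m + 1) * hankel_sq_term n x m)"
    proof -
      have "real (m + K) + 1 \<le> (real K + 1) * (real m + 1)"
        by (simp add: algebra_simps)
      also have "\<dots> \<le> q ^ K * (real m + 1)"
        using assms(2) by (intro mult_right_mono) auto
      finally show ?thesis
        using hankel_sq_term_nonneg[of n x m] by (simp add: mult_right_mono mult.assoc[symmetric])
    qed
    then have "(real (m + K) + 1) * hankel_sq_term n x m \<le> (real (m + K) + 1) * hankel_sq_term n x (m + K)"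
      using iter by (rule order_trans)
    then show ?thesis
      by (simp add: mult_le_cancel_left_pos)
  qed
  then show ?thesis
    unfolding hankel_norm_sq_def hankel_moment_def using assms(3)
    by (intro shift_dominated_sum_le_moment) (auto simp: hankel_sq_term_nonneg)
qed

lemma square_gap_ge:
  fixes lam0 theta x :: real
  assumes "0 \<le> theta" "theta \<le> 1" "0 \<le> lam0" "lam0 \<le> real n * x" "real i \<le> theta * real n"
  shows "lam0\<^sup>2 * (1 - theta) \<le> ((real n)\<^sup>2 - (real i)\<^sup>2) * x\<^sup>2"
proof -
  have "(real i)\<^sup>2 \<le> theta * (real n)\<^sup>2"
  proof -
    have "(real i)\<^sup>2 \<le> (theta * real n)\<^sup>2"
      using assms by (intro power_mono) auto
    also have "\<dots> = theta * (theta * (real n)\<^sup>2)"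
      by (simp add: power2_eq_square)
    also have "\<dots> \<le> theta * (real n)\<^sup>2"
      using assms by (intro mult_left_le_one_le) auto
    finally show ?thesis .
  qed
  then have "((real n)\<^sup>2 - theta * (real n)\<^sup>2) * x\<^sup>2 \<le> ((real n)\<^sup>2 - (real i)\<^sup>2) * x\<^sup>2"
    by (intro mult_right_mono) auto
  then have "(1 - theta) * (real n * x)\<^sup>2 \<le> ((real n)\<^sup>2 - (real i)\<^sup>2) * x\<^sup>2"
    by (simp add: algebra_simps)
  moreover have "lam0\<^sup>2 * (1 - theta) \<le> (real n * x)\<^sup>2 * (1 - theta)"
    using assms by (intro mult_right_mono power_mono) auto
  ultimately show ?thesis
    by (simp add: mult.commute)
qed

section \<open>Bounds for \<open>|z\<^sub>n(k) + 1|\<close>\<close>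

lemma norm_zfun_plus_one_le:
  assumes "r > 0"
  shows "cmod (zfun n r + 1) \<le> real n + r"
proof -
  define G where "G = hankel_norm_sq n (1 / r)"
  define S where "S = hankel_moment n (1 / r)"
  have "G \<ge> 1" "0 \<le> S" "S \<le> real n * G"
    using hankel_norm_sq_ge_1[of n "1 / r"] hankel_moment_ge[of n "1 / r"] hankel_moment_le[of n "1 / r"]
    by (simp_all add: G_def S_def)
  then have "S / G \<le> real n" "r / G \<le> r"
    using assms by (simp_all add: divide_le_eq mult.commute)
  moreover have "sqrt ((S / G)\<^sup>2 + (r / G)\<^sup>2) \<le> S / G + r / G"
    using \<open>G \<ge> 1\<close> \<open>0 \<le> S\<close> assms by (intro sqrt_sum_squares_le_sum) auto
  ultimately show ?thesis
    unfolding norm_zfun_plus_one[OF assms] G_def[symmetric] S_def[symmetric] by linarith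
qed

lemma one_le_sqrt2_norm_zfun_plus_one:
  assumes "r \<ge> 1"
  shows "1 \<le> sqrt 2 * cmod (zfun n r + 1)"
proof -
  define G where "G = hankel_norm_sq n (1 / r)"
  define S where "S = hankel_moment n (1 / r)"
  have "G \<ge> 1" "G - 1 \<le> S"
    using hankel_norm_sq_ge_1 hankel_moment_ge by (simp_all add: G_def S_def)
  then have "(G - 1)\<^sup>2 \<le> S\<^sup>2"
    by (intro power_mono) auto
  moreover have "1 \<le> r\<^sup>2"
    using assms by simp
  ultimately have "G\<^sup>2 \<le> 2 * (S\<^sup>2 + r\<^sup>2)"
    using zero_le_power2[of "G - 2"] unfolding power2_diff by (simp; linarith)
  then have "1 \<le> 2 * ((S / G)\<^sup>2 + (r / G)\<^sup>2)"
    using \<open>G \<ge> 1\<close> by (simp add: field_simps)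
  then have "1\<^sup>2 \<le> (sqrt 2 * sqrt ((S / G)\<^sup>2 + (r / G)\<^sup>2))\<^sup>2"
    by (simp add: power_mult_distrib)
  moreover have "cmod (zfun n r + 1) = sqrt ((S / G)\<^sup>2 + (r / G)\<^sup>2)"
    unfolding G_def S_def using assms by (intro norm_zfun_plus_one) simp
  ultimately show ?thesis
    by (auto intro: power2_le_imp_le[of 1])
qed

lemma norm_zfun_plus_one_ge_large_order:
  assumes "lam0 > 1" and "r \<ge> 1" and "real n > lam0 * r\<^sup>2"
  shows "real n + 1 \<le> 2 * sqrt 2 * (2 / lam0 + 1) * cmod (zfun n r + 1)"
proof -
  define a where "a = 2 / lam0"
  define G where "G = hankel_norm_sq n (1 / r)"
  define S where "S = hankel_moment n (1 / r)"
  have a: "0 < a" "a < 2"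
    using assms(1) by (simp_all add: a_def divide_less_eq)
  have "lam0 \<le> lam0 * r\<^sup>2"
    using assms by simp
  then have "1 < real n"
    using assms by linarith
  then have n: "real n \<ge> 2"
    by simp
  have "2 * r\<^sup>2 \<le> a * real n"
    using assms by (simp add: a_def field_simps)
  have "G \<ge> 1"
    by (simp add: G_def hankel_norm_sq_ge_1)
  have "(1 / r)\<^sup>2 * (real n + 1) * (real n * G - S) \<le> 2 * G"
    unfolding G_def S_def by (rule hankel_moment_deficit)
  then have "real n * G - S \<le> 2 * r\<^sup>2 * G / (real n + 1)"
    using assms(2) by (simp add: field_simps)
  also have "\<dots> \<le> a * real n * G / (real n + 1)"
    using \<open>2 * r\<^sup>2 \<le> a * real n\<close> \<open>G \<ge> 1\<close> by (intro divide_right_mono mult_right_mono) auto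
  finally have "real n - a * real n / (real n + 1) \<le> S / G"
    using \<open>G \<ge> 1\<close> by (simp add: field_simps)
  also have "S / G \<le> cmod (zfun n r + 1)"
    unfolding G_def S_def using assms(2) by (intro moment_ratio_le_norm_zfun_plus_one) simp
  finally have L: "real n - a * real n / (real n + 1) \<le> cmod (zfun n r + 1)" .
  have "(1 + a) * (real n - a * real n / (real n + 1)) - real n = real n * a * (real n - a) / (real n + 1)"
    by (simp add: field_simps)
  moreover have "0 \<le> real n * a * (real n - a) / (real n + 1)"
    using a n by simp
  ultimately have "real n \<le> (1 + a) * cmod (zfun n r + 1)"
    using a mult_left_mono[OF L, of "1 + a"] by linarith
  have "real n + 1 \<le> 2 * sqrt 2 * real n"
  proof -
    have "2 * real n \<le> 2 * sqrt 2 * real n"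
      by (intro mult_right_mono) auto
    then show ?thesis
      using n by linarith
  qed
  also have "\<dots> \<le> 2 * sqrt 2 * ((1 + a) * cmod (zfun n r + 1))"
    using \<open>real n \<le> (1 + a) * cmod (zfun n r + 1)\<close> by (intro mult_left_mono) auto
  finally show ?thesis
    by (simp add: a_def mult_ac add.commute)
qed

lemma hankel_moment_ratio_ge_linear:
  fixes lam0 :: real
  assumes "lam0 > 1"
  obtains c N where "c > 0"
    and "\<And>n x. 0 < x \<Longrightarrow> lam0 \<le> real n * x \<Longrightarrow> N \<le> real n
           \<Longrightarrow> c * (real n + 1) \<le> hankel_moment n x / hankel_norm_sq n x"
proof -
  \<comment> \<open>Below the index \<open>theta * n\<close> the terms \<open>(m + 1) t\<^sub>m\<close> grow at least by the factor \<open>q > 1\<close>.\<close>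
  define theta where "theta = (lam0 - 1) / (2 * lam0)"
  define q where "q = lam0\<^sup>2 * (1 - theta)"
  have theta: "0 < theta" "theta < 1"
    using assms by (simp_all add: theta_def field_simps)
  have "q = lam0 * (lam0 + 1) / 2"
    using assms by (simp add: q_def theta_def power2_eq_square field_simps)
  then have "q > 1"
    using assms mult_strict_mono[of 1 lam0 2 "lam0 + 1"] by simp
  obtain K0 where K0: "\<And>K. K \<ge> K0 \<Longrightarrow> real K + 1 \<le> q ^ K"
    using eventually_Suc_le_power[OF \<open>q > 1\<close>] by (auto simp: eventually_sequentially)
  have "theta / 16 * (real n + 1) \<le> hankel_moment n x / hankel_norm_sq n x"
    if "0 < x" "lam0 \<le> real n * x" "(2 * real K0 + 4) / theta \<le> real n" for n x
  proof -
    define K where "K = nat \<lfloor>theta * real n / 2\<rfloor>"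
    have large: "2 * real K0 + 4 \<le> theta * real n"
      using that(3) theta by (simp add: field_simps)
    then have K: "real K \<le> theta * real n / 2" "theta * real n / 2 - 1 < real K"
      unfolding K_def by linarith+
    then have "K0 \<le> K" "2 * K \<le> n"
      using large theta mult_left_le_one_le[of "real n" theta] by linarith+
    have "real K * hankel_norm_sq n x \<le> 2 * hankel_moment n x"
    proof (rule hankel_norm_sq_le_moment_of_growth[OF \<open>q > 1\<close> K0[OF \<open>K0 \<le> K\<close>] \<open>2 * K \<le> n\<close>])
      fix i assume "i < 2 * K"
      then show "q \<le> ((real n)\<^sup>2 - (real i)\<^sup>2) * x\<^sup>2"
        unfolding q_def using K theta assms that by (intro square_gap_ge) auto
    qed
    then have "real K / 2 \<le> hankel_moment n x / hankel_norm_sq n x"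
      using hankel_norm_sq_ge_1[of n x] by (simp add: field_simps)
    moreover have "theta / 16 * (real n + 1) \<le> real K / 2"
    proof -
      have "theta / 16 * (real n + 1) = theta * real n / 16 + theta / 16"
        by (simp add: algebra_simps)
      then show ?thesis
        using K large theta by linarith
    qed
    ultimately show ?thesis
      by linarith
  qed
  then show thesis
    using that[of "theta / 16" "(2 * real K0 + 4) / theta"] theta by auto
qed

lemma norm_zfun_plus_one_ge_linear:
  fixes lam0 :: real
  assumes "lam0 > 1"
  obtains C0 where "C0 > 0"
    and "\<And>n r. r \<ge> 1 \<Longrightarrow> lam0 * r \<le> real n \<Longrightarrow> real n + 1 \<le> C0 * cmod (zfun n r + 1)"
proof -
  obtain c N where "c > 0" and c: "\<And>n x. 0 < x \<Longrightarrow> lam0 \<le> real n * x \<Longrightarrow> N \<le> real n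
      \<Longrightarrow> c * (real n + 1) \<le> hankel_moment n x / hankel_norm_sq n x"
    using hankel_moment_ratio_ge_linear[OF assms] by blast
  define C0 where "C0 = max (1 / c) (sqrt 2 * (N + 1))"
  have "real n + 1 \<le> C0 * cmod (zfun n r + 1)" if "r \<ge> 1" "lam0 * r \<le> real n" for n r
  proof (cases "N \<le> real n")
    case True
    have "c * (real n + 1) \<le> cmod (zfun n r + 1)"
      using c[of "1 / r" n] True that moment_ratio_le_norm_zfun_plus_one[of r n]
      by (simp add: field_simps)
    then have "real n + 1 \<le> 1 / c * cmod (zfun n r + 1)"
      using \<open>c > 0\<close> by (simp add: field_simps)
    also have "\<dots> \<le> C0 * cmod (zfun n r + 1)"
      unfolding C0_def by (intro mult_right_mono) auto
    finally show ?thesis .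
  next
    case False
    have "N + 1 \<le> (N + 1) * (sqrt 2 * cmod (zfun n r + 1))"
      using False one_le_sqrt2_norm_zfun_plus_one[OF that(1), of n]
        mult_left_mono[of 1 "sqrt 2 * cmod (zfun n r + 1)" "N + 1"] by simp
    then have "real n + 1 \<le> (N + 1) * (sqrt 2 * cmod (zfun n r + 1))"
      using False by linarith
    also have "\<dots> = sqrt 2 * (N + 1) * cmod (zfun n r + 1)"
      by (simp only: mult_ac)
    also have "\<dots> \<le> C0 * cmod (zfun n r + 1)"
      unfolding C0_def by (intro mult_right_mono) auto
    finally show ?thesis .
  qed
  moreover have "C0 > 0"
    using \<open>c > 0\<close> by (simp add: C0_def less_max_iff_disj)
  ultimately show thesis
    using that by blast
qed

lemma divide_le_of_le_mult:
  fixes k w a C :: real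
  assumes "0 \<le> k" "0 < w" "0 < a" "a \<le> C * w"
  shows "k / w \<le> C * k / a"
proof -
  have "k * a \<le> k * (C * w)"
    using assms by (intro mult_left_mono) auto
  then show ?thesis
    using assms by (simp add: divide_simps mult_ac)
qed

theorem lemma5p2:
  fixes lam0 :: real
  assumes "lam0 > 1"
  shows "\<exists>C0 > 0. \<forall>lam \<ge> lam0. \<forall>k::real. k \<ge> 1 \<longrightarrow> (\<forall>n::nat.
      k / cmod (zfun n k + 1) \<le> 2 * sqrt 2 * k
    \<and> (real n > lam * k\<^sup>2 \<longrightarrow>
         k / cmod (zfun n k + 1) \<le> 2 * sqrt 2 * (2 / lam0 + 1) * k / (real n + 1))
    \<and> (real n \<ge> lam * k \<longrightarrow> k / cmod (zfun n k + 1) \<le> C0 * k / (real n + 1))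
    \<and> cmod (zfun n k + 1) / k \<le> 1 + real n / k)"
proof -
  obtain C0 where "C0 > 0"
    and C0: "\<And>n r. r \<ge> 1 \<Longrightarrow> lam0 * r \<le> real n \<Longrightarrow> real n + 1 \<le> C0 * cmod (zfun n r + 1)"
    using norm_zfun_plus_one_ge_linear[OF assms] by blast
  have "k / cmod (zfun n k + 1) \<le> 2 * sqrt 2 * k
    \<and> (real n > lam * k\<^sup>2 \<longrightarrow>
         k / cmod (zfun n k + 1) \<le> 2 * sqrt 2 * (2 / lam0 + 1) * k / (real n + 1))
    \<and> (real n \<ge> lam * k \<longrightarrow> k / cmod (zfun n k + 1) \<le> C0 * k / (real n + 1))
    \<and> cmod (zfun n k + 1) / k \<le> 1 + real n / k"
    if "lam \<ge> lam0" "k \<ge> 1" for lam k n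
  proof (intro conjI impI)
    have lower: "1 \<le> sqrt 2 * cmod (zfun n k + 1)"
      using that(2) by (rule one_le_sqrt2_norm_zfun_plus_one)
    then have "cmod (zfun n k + 1) > 0"
      by (auto intro: ccontr)
    show "k / cmod (zfun n k + 1) \<le> 2 * sqrt 2 * k"
      using divide_le_of_le_mult[of k _ 1 "2 * sqrt 2"] lower \<open>cmod (zfun n k + 1) > 0\<close> that by simp
    show "k / cmod (zfun n k + 1) \<le> 2 * sqrt 2 * (2 / lam0 + 1) * k / (real n + 1)"
      if "real n > lam * k\<^sup>2"
    proof (rule divide_le_of_le_mult)
      have "lam0 * k\<^sup>2 \<le> lam * k\<^sup>2"
        using \<open>lam \<ge> lam0\<close> by (intro mult_right_mono) auto
      then show "real n + 1 \<le> 2 * sqrt 2 * (2 / lam0 + 1) * cmod (zfun n k + 1)"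
        using that by (intro norm_zfun_plus_one_ge_large_order[OF assms \<open>k \<ge> 1\<close>]) auto
    qed (use \<open>k \<ge> 1\<close> \<open>cmod (zfun n k + 1) > 0\<close> in auto)
    show "k / cmod (zfun n k + 1) \<le> C0 * k / (real n + 1)" if "real n \<ge> lam * k"
    proof (rule divide_le_of_le_mult)
      have "lam0 * k \<le> lam * k"
        using \<open>lam \<ge> lam0\<close> \<open>k \<ge> 1\<close> by (intro mult_right_mono) auto
      then show "real n + 1 \<le> C0 * cmod (zfun n k + 1)"
        using that by (intro C0 \<open>k \<ge> 1\<close>) auto
    qed (use \<open>k \<ge> 1\<close> \<open>cmod (zfun n k + 1) > 0\<close> in auto)
    show "cmod (zfun n k + 1) / k \<le> 1 + real n / k"
      using norm_zfun_plus_one_le[of k n] that(2) by (simp add: divide_simps)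
  qed
  then show ?thesis
    using \<open>C0 > 0\<close> by blast
qed

end
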